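(* Let $\mathfrak g$ be a finite-dimensional simple complex Lie algebra of rank $n$ and $m=|\Psi_{\min}|$. Then: (i) $m=n$ if and only if $\mathfrak g$ is of type $A_1$, $B_n$, $C_n$, $D_n$ with $n=2k+2$, $E_7$, $E_8$, $F_4$ or $G_2$; (ii) $m=14$ if $\mathfrak g$ is of type $E_6$; (iii) $m=n+1$ if $\mathfrak g$ is of type $D_n$ with $n=2k+3$; (iv) $m\ge n+1$ if $\mathfrak g$ is of type $A_n$ with $n\ge2$.
   Context: With root lattice $Q$ and dominant integral weights $\Lambda^+$ of $\mathfrak g$, let $\Psi=\{\lambda\in\Lambda^+:2\lambda\in Q\}$ and $\Psi_{\min}=\{\lambda\in\Psi\setminus\{0\}:\lambda\ne\mu_1+\mu_2\text{ for all }\mu_1,\mu_2\in\Psi\setminus\{0\}\}$. *)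

theory Defs
  imports Main
begin

text \<open>Cartan--Killing types of finite-dimensional simple complex Lie algebras.
  Simple roots, Cartan matrix and fundamental weights use Bourbaki numbering.\<close>

datatype cartan_type = A nat | B nat | C nat | D nat | E6 | E7 | E8 | F4 | G2

fun valid_type :: "cartan_type \<Rightarrow> bool" where
  "valid_type (A n) = (n \<ge> 1)"
| "valid_type (B n) = (n \<ge> 2)"
| "valid_type (C n) = (n \<ge> 3)"
| "valid_type (D n) = (n \<ge> 4)"
| "valid_type _ = True"

fun rank :: "cartan_type \<Rightarrow> nat" where
  "rank (A n) = n" | "rank (B n) = n" | "rank (C n) = n" | "rank (D n) = n"
| "rank E6 = 6" | "rank E7 = 7" | "rank E8 = 8" | "rank F4 = 4" | "rank G2 = 2"

definition chain_adj :: "nat \<Rightarrow> nat \<Rightarrow> bool" where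
  "chain_adj i j \<longleftrightarrow> i + 1 = j \<or> j + 1 = i"

fun dyn_adj :: "cartan_type \<Rightarrow> nat \<Rightarrow> nat \<Rightarrow> bool" where
  "dyn_adj (A n) i j = chain_adj i j"
| "dyn_adj (B n) i j = chain_adj i j"
| "dyn_adj (C n) i j = chain_adj i j"
| "dyn_adj (D n) i j =
     ((chain_adj i j \<and> i \<le> n - 1 \<and> j \<le> n - 1) \<or> {i, j} = {n - 2, n})"
| "dyn_adj E6 i j = ({i,j} \<in> {{1,3},{3,4},{4,5},{5,6},{2,4}})"
| "dyn_adj E7 i j = ({i,j} \<in> {{1,3},{3,4},{4,5},{5,6},{6,7},{2,4}})"
| "dyn_adj E8 i j = ({i,j} \<in> {{1,3},{3,4},{4,5},{5,6},{6,7},{7,8},{2,4}})"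
| "dyn_adj F4 i j = chain_adj i j"
| "dyn_adj G2 i j = chain_adj i j"

text \<open>Cartan integers \<open>cartan t i j = \<langle>\<alpha>_i, \<alpha>_j^\<or>\<rangle>\<close> for \<open>1 \<le> i, j \<le> rank t\<close>,
  i.e. the coefficient of the fundamental weight \<open>\<omega>_j\<close> in the simple root \<open>\<alpha>_i\<close>.\<close>
definition cartan :: "cartan_type \<Rightarrow> nat \<Rightarrow> nat \<Rightarrow> int" where
  "cartan t i j =
    (if i = j then 2
     else if \<not> dyn_adj t i j then 0
     else (case t of
             B n \<Rightarrow> if i = n - 1 \<and> j = n then -2 else -1
           | C n \<Rightarrow> if i = n \<and> j = n - 1 then -2 else -1
           | F4 \<Rightarrow> if i = 2 \<and> j = 3 then -2 else -1
           | G2 \<Rightarrow> if i = 2 \<and> j = 1 then -3 else -1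
           | _ \<Rightarrow> -1))"

text \<open>Integral weights, written in the basis of fundamental weights
  (coordinates indexed by \<open>{1..rank t}\<close>, zero elsewhere).\<close>
definition weights :: "cartan_type \<Rightarrow> (nat \<Rightarrow> int) set" where
  "weights t = {w. \<forall>i. i \<notin> {1..rank t} \<longrightarrow> w i = 0}"

definition root_lattice :: "cartan_type \<Rightarrow> (nat \<Rightarrow> int) set" where
  "root_lattice t = {w \<in> weights t. \<exists>c :: nat \<Rightarrow> int.
       \<forall>j \<in> {1..rank t}. w j = (\<Sum>i\<in>{1..rank t}. c i * cartan t i j)}"

definition dominant :: "cartan_type \<Rightarrow> (nat \<Rightarrow> int) set" where
  "dominant t = {w \<in> weights t. \<forall>i. 0 \<le> w i}"

definition Psi :: "cartan_type \<Rightarrow> (nat \<Rightarrow> int) set" where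
  "Psi t = {w \<in> dominant t. (\<lambda>i. 2 * w i) \<in> root_lattice t}"

definition Psi_min :: "cartan_type \<Rightarrow> (nat \<Rightarrow> int) set" where
  "Psi_min t = {w \<in> Psi t - {\<lambda>i. 0}.
     \<not> (\<exists>\<mu>1 \<in> Psi t - {\<lambda>i. 0}. \<exists>\<mu>2 \<in> Psi t - {\<lambda>i. 0}. w = (\<lambda>i. \<mu>1 i + \<mu>2 i))}"

end

theory Submission
  imports Defs
begin

text \<open>\<open>\<Psi>\<close> consists of the dominant weights whose class in \<open>\<Lambda>/Q\<close> has order at most \<open>2\<close>, and it
  is closed under differences that stay dominant; hence \<open>\<Psi>\<^sub>m\<^sub>i\<^sub>n\<close> is the set of minimal nonzero
  elements of \<open>\<Psi>\<close> for the componentwise order in the basis of fundamental weights.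
  If \<open>\<Lambda>/Q\<close> has exponent at most \<open>2\<close> (types \<open>A\<^sub>1\<close>, \<open>B\<^sub>n\<close>, \<open>C\<^sub>n\<close>, \<open>D\<^sub>n\<close> for even \<open>n\<close>, \<open>E\<^sub>7\<close>, \<open>E\<^sub>8\<close>,
  \<open>F\<^sub>4\<close>, \<open>G\<^sub>2\<close>), every fundamental weight lies in \<open>\<Psi>\<close>, so \<open>\<Psi>\<^sub>m\<^sub>i\<^sub>n\<close> consists of the \<open>n\<close>
  fundamental weights. Otherwise \<open>\<Lambda>/Q\<close> is cyclic of order \<open>m > 2\<close> and is detected by a linear form
  reduced mod \<open>m\<close>. For \<open>D\<^sub>n\<close> with odd \<open>n\<close> (\<open>m = 4\<close>), \<open>\<Psi>\<close> is cut out by the parity of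
  \<open>\<lambda>\<^sub>n\<^sub>-\<^sub>1 + \<lambda>\<^sub>n\<close>, leaving \<open>\<omega>\<^sub>1, \<dots>, \<omega>\<^sub>n\<^sub>-\<^sub>2, 2\<omega>\<^sub>n\<^sub>-\<^sub>1, 2\<omega>\<^sub>n, \<omega>\<^sub>n\<^sub>-\<^sub>1 + \<omega>\<^sub>n\<close>; for \<open>E\<^sub>6\<close>
  (\<open>m = 3\<close>), by \<open>3 \<bar> \<lambda>\<^sub>1 - \<lambda>\<^sub>3 + \<lambda>\<^sub>5 - \<lambda>\<^sub>6\<close>, leaving 14 minimal elements. For \<open>A\<^sub>n\<close> (\<open>m = n + 1\<close>)
  each ray \<open>\<nat> \<omega>\<^sub>i\<close> contains a minimal element because \<open>(n + 1) \<omega>\<^sub>i \<in> Q\<close>, and \<open>\<omega>\<^sub>1 + \<omega>\<^sub>n\<close> is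
  one more, as neither \<open>\<omega>\<^sub>1\<close> nor \<open>\<omega>\<^sub>n\<close> lies in \<open>\<Psi>\<close>.\<close>

definition simple_root_comb :: "cartan_type \<Rightarrow> (nat \<Rightarrow> int) \<Rightarrow> nat \<Rightarrow> int" where
  "simple_root_comb t c j = (if j \<in> {1..rank t} then \<Sum>i\<in>{1..rank t}. c i * cartan t i j else 0)"

lemma root_lattice_eq_range: "root_lattice t = range (simple_root_comb t)"
proof
  show "root_lattice t \<subseteq> range (simple_root_comb t)"
  proof
    fix w assume "w \<in> root_lattice t"
    then obtain c where "w \<in> weights t" "\<forall>j\<in>{1..rank t}. w j = (\<Sum>i\<in>{1..rank t}. c i * cartan t i j)"
      unfolding root_lattice_def by blast
    then have "w = simple_root_comb t c"
      by (auto simp: weights_def simple_root_comb_def)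
    then show "w \<in> range (simple_root_comb t)" by blast
  qed
qed (auto simp: root_lattice_def weights_def simple_root_comb_def)

lemma simple_root_comb_in_root_lattice [simp]: "simple_root_comb t c \<in> root_lattice t"
  by (simp add: root_lattice_eq_range)

lemma root_latticeI:
  assumes "w \<in> weights t" "\<And>j. j \<in> {1..rank t} \<Longrightarrow> w j = simple_root_comb t c j"
  shows "w \<in> root_lattice t"
proof -
  have "w = simple_root_comb t c"
    using assms by (auto simp: weights_def simple_root_comb_def)
  then show ?thesis by simp
qed

lemma root_lattice_add:
  assumes "v \<in> root_lattice t" "w \<in> root_lattice t"
  shows "(\<lambda>j. v j + w j) \<in> root_lattice t"
proof -
  obtain c d where "v = simple_root_comb t c" "w = simple_root_comb t d"
    using assms by (auto simp: root_lattice_eq_range)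
  then have "(\<lambda>j. v j + w j) = simple_root_comb t (\<lambda>i. c i + d i)"
    by (auto simp: simple_root_comb_def distrib_right sum.distrib)
  then show ?thesis by simp
qed

lemma root_lattice_scale:
  assumes "w \<in> root_lattice t"
  shows "(\<lambda>j. a * w j) \<in> root_lattice t"
proof -
  obtain c where "w = simple_root_comb t c"
    using assms by (auto simp: root_lattice_eq_range)
  then have "(\<lambda>j. a * w j) = simple_root_comb t (\<lambda>i. a * c i)"
    by (auto simp: simple_root_comb_def sum_distrib_left mult.assoc)
  then show ?thesis by simp
qed

lemma root_lattice_diff:
  assumes "v \<in> root_lattice t" "w \<in> root_lattice t"
  shows "(\<lambda>j. v j - w j) \<in> root_lattice t"
  using root_lattice_add[OF assms(1) root_lattice_scale[OF assms(2), of "-1"]] by simp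

lemma root_lattice_sum:
  assumes "finite S" "\<And>i. i \<in> S \<Longrightarrow> f i \<in> root_lattice t"
  shows "(\<lambda>j. \<Sum>i\<in>S. a i * f i j) \<in> root_lattice t"
  using assms
proof (induction S rule: finite_induct)
  case empty
  have "simple_root_comb t (\<lambda>i. 0) = (\<lambda>j. 0)" by (auto simp: simple_root_comb_def)
  then show ?case using simple_root_comb_in_root_lattice[of t "\<lambda>i. 0"] by simp
next
  case (insert x F)
  then have "(\<lambda>j. a x * f x j + (\<Sum>i\<in>F. a i * f i j)) \<in> root_lattice t"
    by (intro root_lattice_add root_lattice_scale) auto
  then show ?case using insert by simp
qed

text \<open>The linear forms used with this lemma (types \<open>A\<^sub>n\<close>, \<open>D\<^sub>n\<close> for odd \<open>n\<close>, \<open>E\<^sub>6\<close>) are, up to sign and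
  reduction mod \<open>m = |\<Lambda>/Q|\<close>, rows of \<open>m\<close> times the inverse Cartan matrix.\<close>
lemma root_lattice_dvd_linear_form:
  assumes "\<forall>i\<in>{1..rank t}. m dvd (\<Sum>j\<in>{1..rank t}. g j * cartan t i j)"
    and "w \<in> root_lattice t"
  shows "m dvd (\<Sum>j\<in>{1..rank t}. g j * w j)"
proof -
  obtain c where "w = simple_root_comb t c"
    using assms(2) by (auto simp: root_lattice_eq_range)
  then have "(\<Sum>j\<in>{1..rank t}. g j * w j)
      = (\<Sum>j\<in>{1..rank t}. \<Sum>i\<in>{1..rank t}. c i * (g j * cartan t i j))"
    by (simp add: simple_root_comb_def sum_distrib_left algebra_simps)
  also have "\<dots> = (\<Sum>i\<in>{1..rank t}. c i * (\<Sum>j\<in>{1..rank t}. g j * cartan t i j))"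
    by (subst sum.swap) (simp add: sum_distrib_left)
  also have "m dvd \<dots>"
    using assms(1) by (intro dvd_sum) auto
  finally show ?thesis .
qed

lemma Psi_nonneg: "w \<in> Psi t \<Longrightarrow> 0 \<le> w i"
  by (auto simp: Psi_def dominant_def)

lemma Psi_outside_rank: "w \<in> Psi t \<Longrightarrow> i \<notin> {1..rank t} \<Longrightarrow> w i = 0"
  by (auto simp: Psi_def dominant_def weights_def)

lemma PsiI:
  assumes "w \<in> weights t" "\<And>i. 0 \<le> w i" "(\<lambda>i. 2 * w i) \<in> root_lattice t"
  shows "w \<in> Psi t"
  using assms by (simp add: Psi_def dominant_def)

lemma Psi_diff:
  assumes "v \<in> Psi t" "w \<in> Psi t" "v \<le> w"
  shows "(\<lambda>i. w i - v i) \<in> Psi t"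
proof (rule PsiI)
  show "(\<lambda>i. w i - v i) \<in> weights t"
    using assms(1,2) by (auto simp: Psi_def dominant_def weights_def)
  show "0 \<le> w i - v i" for i
    using assms(3) by (simp add: le_fun_def)
  show "(\<lambda>i. 2 * (w i - v i)) \<in> root_lattice t"
    using root_lattice_diff[of "\<lambda>i. 2 * w i" t "\<lambda>i. 2 * v i"] assms(1,2)
    by (simp add: Psi_def right_diff_distrib)
qed

lemma Psi_min_iff:
  "w \<in> Psi_min t \<longleftrightarrow> w \<in> Psi t - {\<lambda>i. 0} \<and> (\<forall>v \<in> Psi t - {\<lambda>i. 0}. v \<le> w \<longrightarrow> v = w)"
proof
  assume w: "w \<in> Psi_min t"
  show "w \<in> Psi t - {\<lambda>i. 0} \<and> (\<forall>v \<in> Psi t - {\<lambda>i. 0}. v \<le> w \<longrightarrow> v = w)"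
  proof (intro conjI ballI impI)
    show w_Psi: "w \<in> Psi t - {\<lambda>i. 0}" using w by (simp add: Psi_min_def)
    fix v assume v: "v \<in> Psi t - {\<lambda>i. 0}" "v \<le> w"
    show "v = w"
    proof (rule ccontr)
      assume "v \<noteq> w"
      then have "(\<lambda>i. w i - v i) \<noteq> (\<lambda>i. 0)" by (metis (no_types) eq_iff_diff_eq_0 ext)
      then have "(\<lambda>i. w i - v i) \<in> Psi t - {\<lambda>i. 0}"
        using Psi_diff[of v t w] v w_Psi by blast
      then have "\<exists>\<mu>1 \<in> Psi t - {\<lambda>i. 0}. \<exists>\<mu>2 \<in> Psi t - {\<lambda>i. 0}. w = (\<lambda>i. \<mu>1 i + \<mu>2 i)"
        using v(1) by (intro bexI[of _ v] bexI[of _ "\<lambda>i. w i - v i"]) auto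
      then show False using w unfolding Psi_min_def by blast
    qed
  qed
next
  assume w: "w \<in> Psi t - {\<lambda>i. 0} \<and> (\<forall>v \<in> Psi t - {\<lambda>i. 0}. v \<le> w \<longrightarrow> v = w)"
  have "\<not> (\<exists>\<mu>1 \<in> Psi t - {\<lambda>i. 0}. \<exists>\<mu>2 \<in> Psi t - {\<lambda>i. 0}. w = (\<lambda>i. \<mu>1 i + \<mu>2 i))"
  proof
    assume "\<exists>\<mu>1 \<in> Psi t - {\<lambda>i. 0}. \<exists>\<mu>2 \<in> Psi t - {\<lambda>i. 0}. w = (\<lambda>i. \<mu>1 i + \<mu>2 i)"
    then obtain \<mu>1 \<mu>2 where \<mu>: "\<mu>1 \<in> Psi t - {\<lambda>i. 0}" "\<mu>2 \<in> Psi t - {\<lambda>i. 0}"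
      and w_eq: "w = (\<lambda>i. \<mu>1 i + \<mu>2 i)" by blast
    have "\<mu>1 \<le> w" using w_eq Psi_nonneg[of \<mu>2 t] \<mu>(2) by (simp add: le_fun_def)
    then have "\<mu>1 = w" using w \<mu>(1) by blast
    then have "\<mu>2 = (\<lambda>i. 0)" using w_eq by (auto simp: fun_eq_iff)
    then show False using \<mu>(2) by simp
  qed
  then show "w \<in> Psi_min t" using w by (simp add: Psi_min_def)
qed

lemma Psi_minI:
  assumes "w \<in> Psi t" "w \<noteq> (\<lambda>i. 0)" "\<And>v. v \<in> Psi t - {\<lambda>i. 0} \<Longrightarrow> v \<le> w \<Longrightarrow> v = w"
  shows "w \<in> Psi_min t"
  using assms by (simp add: Psi_min_iff)

lemma Psi_minD:
  assumes "w \<in> Psi_min t"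
  shows "w \<in> Psi t" "w \<noteq> (\<lambda>i. 0)" "\<And>v. v \<in> Psi t - {\<lambda>i. 0} \<Longrightarrow> v \<le> w \<Longrightarrow> v = w"
  using assms by (simp_all add: Psi_min_iff)

lemma Psi_min_eqI:
  assumes "S \<subseteq> Psi t - {\<lambda>i. 0}"
    and "\<And>w. w \<in> Psi t - {\<lambda>i. 0} \<Longrightarrow> \<exists>s\<in>S. s \<le> w"
    and "\<And>s s'. s \<in> S \<Longrightarrow> s' \<in> S \<Longrightarrow> s \<le> s' \<Longrightarrow> s = s'"
  shows "Psi_min t = S"
proof
  show "Psi_min t \<subseteq> S"
  proof
    fix w assume "w \<in> Psi_min t"
    moreover then obtain s where "s \<in> S" "s \<le> w" using assms(2) by (auto simp: Psi_min_iff)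
    ultimately show "w \<in> S" using assms(1) by (auto simp: Psi_min_iff)
  qed
  show "S \<subseteq> Psi_min t"
  proof
    fix s assume s: "s \<in> S"
    have "v = s" if "v \<in> Psi t - {\<lambda>i. 0}" "v \<le> s" for v
    proof -
      from assms(2)[OF that(1)] obtain s' where "s' \<in> S" "s' \<le> v" by blast
      then have "s' = s" using assms(3) s that(2) order_trans by blast
      then show "v = s" using \<open>s' \<le> v\<close> that(2) by simp
    qed
    then show "s \<in> Psi_min t" using s assms(1) by (auto simp: Psi_min_iff)
  qed
qed

definition fundamental_weight :: "nat \<Rightarrow> nat \<Rightarrow> int" ("\<omega>") where
  "\<omega> i = (\<lambda>j. if j = i then 1 else 0)"

lemma fundamental_weight_in_Psi:
  assumes "i \<in> {1..rank t}" "0 \<le> k" "(\<lambda>j. 2 * (k * \<omega> i j)) \<in> root_lattice t"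
  shows "(\<lambda>j. k * \<omega> i j) \<in> Psi t"
  using assms by (intro PsiI) (auto simp: weights_def fundamental_weight_def)

lemma scaled_fundamental_weight_eq_0_iff: "(\<lambda>j. k * \<omega> i j) = (\<lambda>j. 0) \<longleftrightarrow> k = 0"
proof
  assume "(\<lambda>j. k * \<omega> i j) = (\<lambda>j. 0)"
  from fun_cong[OF this, of i] show "k = 0" by (simp add: fundamental_weight_def)
qed simp

lemma fundamental_weight_ne_0: "\<omega> i \<noteq> (\<lambda>j. 0)"
  using scaled_fundamental_weight_eq_0_iff[of 1 i] by simp

lemma fundamental_weight_le_iff:
  assumes "\<And>j. 0 \<le> w j"
  shows "(\<lambda>j. k * \<omega> i j) \<le> w \<longleftrightarrow> k \<le> w i"
  using assms by (auto simp: le_fun_def fundamental_weight_def)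

lemma Psi_nonzero_coordinate:
  assumes "w \<in> Psi t - {\<lambda>i. 0}"
  obtains i where "i \<in> {1..rank t}" "1 \<le> w i"
proof -
  obtain i where "w i \<noteq> 0" using assms by auto
  then show ?thesis
    using that Psi_outside_rank[of w t i] Psi_nonneg[of w t i] assms by fastforce
qed

lemma Psi_min_exponent_two:
  assumes "\<forall>i\<in>{1..rank t}. (\<lambda>j. 2 * \<omega> i j) \<in> root_lattice t"
  shows "Psi_min t = \<omega> ` {1..rank t}"
proof (rule Psi_min_eqI)
  have "\<omega> i \<in> Psi t" if "i \<in> {1..rank t}" for i
    using fundamental_weight_in_Psi[of i t 1] that assms by simp
  then show "\<omega> ` {1..rank t} \<subseteq> Psi t - {\<lambda>i. 0}"
    using fundamental_weight_ne_0 by auto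
next
  fix w assume w: "w \<in> Psi t - {\<lambda>i. 0}"
  then obtain i where "i \<in> {1..rank t}" "1 \<le> w i" by (rule Psi_nonzero_coordinate)
  moreover have "\<omega> i \<le> w"
    using fundamental_weight_le_iff[of w 1 i] Psi_nonneg[of w t] w \<open>1 \<le> w i\<close> by simp
  ultimately show "\<exists>s\<in>\<omega> ` {1..rank t}. s \<le> w" by blast
next
  fix s s' assume "s \<in> \<omega> ` {1..rank t}" "s' \<in> \<omega> ` {1..rank t}" "s \<le> s'"
  then obtain i i' where "s = \<omega> i" "s' = \<omega> i'" by blast
  with le_funD[OF \<open>s \<le> s'\<close>, of i] show "s = s'"
    by (simp add: fundamental_weight_def split: if_splits)
qed

lemma inj_fundamental_weight: "inj \<omega>"
  by (rule injI) (metis fundamental_weight_def zero_neq_one)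

lemma card_Psi_min_exponent_two:
  assumes "\<forall>i\<in>{1..rank t}. (\<lambda>j. 2 * \<omega> i j) \<in> root_lattice t"
  shows "card (Psi_min t) = rank t"
  using Psi_min_exponent_two[OF assms] inj_fundamental_weight
  by (simp add: card_image inj_on_subset)

text \<open>The rows of \<open>M\<close> are the coordinates of the \<open>2 \<omega>\<^sub>i\<close> in the basis of simple roots,
  i.e. \<open>M\<close> is twice the inverse Cartan matrix.\<close>
lemma twice_fundamental_weights_in_root_lattice:
  assumes "\<forall>i\<in>{1..rank t}. \<forall>j\<in>{1..rank t}.
      (\<Sum>k\<in>{1..rank t}. M ! (i - 1) ! (k - 1) * cartan t k j) = 2 * \<omega> i j"
  shows "\<forall>i\<in>{1..rank t}. (\<lambda>j. 2 * \<omega> i j) \<in> root_lattice t"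
proof
  fix i assume i: "i \<in> {1..rank t}"
  have "(\<lambda>j. 2 * \<omega> i j) = simple_root_comb t (\<lambda>k. M ! (i - 1) ! (k - 1))"
    using assms i by (auto simp: simple_root_comb_def fundamental_weight_def)
  then show "(\<lambda>j. 2 * \<omega> i j) \<in> root_lattice t" by simp
qed

lemma least_fundamental_multiple_in_Psi_min:
  assumes "0 < k" "(\<lambda>j. int k * \<omega> i j) \<in> Psi t"
  defines "k\<^sub>0 \<equiv> LEAST k. 0 < k \<and> (\<lambda>j. int k * \<omega> i j) \<in> Psi t"
  shows "(\<lambda>j. int k\<^sub>0 * \<omega> i j) \<in> Psi_min t"
proof -
  have k\<^sub>0: "0 < k\<^sub>0" "(\<lambda>j. int k\<^sub>0 * \<omega> i j) \<in> Psi t"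
    using LeastI[of "\<lambda>k. 0 < k \<and> (\<lambda>j. int k * \<omega> i j) \<in> Psi t", OF conjI[OF assms(1,2)]]
    unfolding k\<^sub>0_def by auto
  have "v = (\<lambda>j. int k\<^sub>0 * \<omega> i j)"
    if v: "v \<in> Psi t - {\<lambda>i. 0}" "v \<le> (\<lambda>j. int k\<^sub>0 * \<omega> i j)" for v
  proof -
    have v_off: "v j = 0" if "j \<noteq> i" for j
      using le_funD[OF v(2), of j] Psi_nonneg[of v t j] v(1) that by (simp add: fundamental_weight_def)
    obtain j where "1 \<le> v j" using v(1) by (rule Psi_nonzero_coordinate)
    then have "1 \<le> v i" using v_off by (cases "j = i") auto
    define a where "a = nat (v i)"
    have v_eq: "v = (\<lambda>j. int a * \<omega> i j)"
      using v_off \<open>1 \<le> v i\<close> by (auto simp: a_def fundamental_weight_def)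
    have "0 < a" using \<open>1 \<le> v i\<close> by (simp add: a_def)
    then have "k\<^sub>0 \<le> a"
      unfolding k\<^sub>0_def using v(1) v_eq by (intro Least_le) simp
    moreover have "a \<le> k\<^sub>0"
      using le_funD[OF v(2), of i] \<open>1 \<le> v i\<close> by (simp add: fundamental_weight_def a_def)
    ultimately show ?thesis using v_eq by simp
  qed
  moreover have "(\<lambda>j. int k\<^sub>0 * \<omega> i j) \<noteq> (\<lambda>j. 0)"
    using k\<^sub>0(1) scaled_fundamental_weight_eq_0_iff[of "int k\<^sub>0" i] by simp
  ultimately show ?thesis
    using k\<^sub>0(2) by (intro Psi_minI) auto
qed

lemma finite_Psi_min:
  assumes "0 < N" "\<forall>i\<in>{1..rank t}. (\<lambda>j. N * \<omega> i j) \<in> Psi t"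
  shows "finite (Psi_min t)"
proof (rule finite_subset)
  let ?B = "{w. \<forall>i. (i \<in> {1..rank t} \<longrightarrow> w i \<in> {0..N}) \<and> (i \<notin> {1..rank t} \<longrightarrow> w i = 0)}"
  show "finite ?B" by (rule finite_set_of_finite_funs) simp_all
  show "Psi_min t \<subseteq> ?B"
  proof
    fix w assume w: "w \<in> Psi_min t"
    then have w_Psi: "w \<in> Psi t - {\<lambda>i. 0}" using Psi_minD by blast
    have "w i \<le> N" if i: "i \<in> {1..rank t}" for i
    proof (rule ccontr)
      assume "\<not> w i \<le> N"
      then have "(\<lambda>j. N * \<omega> i j) \<le> w"
        using fundamental_weight_le_iff[of w N i] Psi_nonneg[of w t] w_Psi by simp
      moreover have "(\<lambda>j. N * \<omega> i j) \<noteq> (\<lambda>i. 0)"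
        using assms(1) scaled_fundamental_weight_eq_0_iff[of N i] by simp
      ultimately have "(\<lambda>j. N * \<omega> i j) = w" using Psi_minD(3)[OF w] assms(2) i by blast
      from fun_cong[OF this, of i] show False
        using \<open>\<not> w i \<le> N\<close> by (simp add: fundamental_weight_def)
    qed
    then show "w \<in> ?B" using Psi_nonneg[of w t] Psi_outside_rank[of w t] w_Psi by auto
  qed
qed

section \<open>Exceptional types and \<open>A\<^sub>1\<close>: explicit inverse Cartan matrices\<close>

lemma card_Psi_min_A1: "card (Psi_min (A 1)) = 1"
  using card_Psi_min_exponent_two[of "A 1"]
    twice_fundamental_weights_in_root_lattice[of "A 1" "[[1]]"]
  by (simp add: cartan_def fundamental_weight_def)

lemma card_Psi_min_G2: "card (Psi_min G2) = 2"
  using card_Psi_min_exponent_two[of G2]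
    twice_fundamental_weights_in_root_lattice[of G2 "[[4,2],[6,4]]"]
  by (simp add: cartan_def chain_adj_def fundamental_weight_def numeral_eq_Suc atLeastAtMostSuc_conv)

lemma card_Psi_min_F4: "card (Psi_min F4) = 4"
  using card_Psi_min_exponent_two[of F4]
    twice_fundamental_weights_in_root_lattice[of F4 "[[4,6,8,4],[6,12,16,8],[4,8,12,6],[2,4,6,4]]"]
  by (simp add: cartan_def chain_adj_def fundamental_weight_def numeral_eq_Suc atLeastAtMostSuc_conv)

lemma card_Psi_min_E7: "card (Psi_min E7) = 7"
  using card_Psi_min_exponent_two[of E7]
    twice_fundamental_weights_in_root_lattice[of E7 "[[4,4,6,8,6,4,2],[4,7,8,12,9,6,3],
      [6,8,12,16,12,8,4],[8,12,16,24,18,12,6],[6,9,12,18,15,10,5],[4,6,8,12,10,8,4],[2,3,4,6,5,4,3]]"]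
  by (simp add: cartan_def chain_adj_def fundamental_weight_def numeral_eq_Suc atLeastAtMostSuc_conv
      doubleton_eq_iff)

lemma card_Psi_min_E8: "card (Psi_min E8) = 8"
  using card_Psi_min_exponent_two[of E8]
    twice_fundamental_weights_in_root_lattice[of E8 "[[8,10,14,20,16,12,8,4],
      [10,16,20,30,24,18,12,6],[14,20,28,40,32,24,16,8],[20,30,40,60,48,36,24,12],
      [16,24,32,48,40,30,20,10],[12,18,24,36,30,24,16,8],[8,12,16,24,20,16,12,6],[4,6,8,12,10,8,6,4]]"]
  by (simp add: cartan_def chain_adj_def fundamental_weight_def numeral_eq_Suc atLeastAtMostSuc_conv
      doubleton_eq_iff)

section \<open>Types \<open>A\<close>, \<open>B\<close>, \<open>C\<close>\<close>

lemma cartan_chain: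
  assumes "t \<in> {A n, B n, C n}"
  shows "cartan t i j = (if i = j then 2 else 0)
    - (if i + 1 = j then if t = B n \<and> j = n then 2 else 1 else 0)
    - (if j + 1 = i then if t = C n \<and> i = n then 2 else 1 else 0)"
  using assms by (elim insertE emptyE) (auto simp: cartan_def chain_adj_def)

lemma simple_root_comb_chain:
  assumes "t \<in> {A n, B n, C n}" "j \<in> {1..n}"
  shows "simple_root_comb t c j = 2 * c j
    - (if 1 < j then (if t = B n \<and> j = n then 2 else 1) * c (j - 1) else 0)
    - (if j < n then (if t = C n \<and> j + 1 = n then 2 else 1) * c (j + 1) else 0)"
proof -
  have rank: "rank t = n" using assms(1) by auto
  have "simple_root_comb t c j = (\<Sum>i\<in>{1..n}. c i * cartan t i j)"
    using assms(2) by (simp add: simple_root_comb_def rank)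
  also have "\<dots> = (\<Sum>i\<in>{1..n}. (if i = j then 2 * c j else 0)
      - (if i = j - 1 then (if t = B n \<and> j = n then 2 else 1) * c (j - 1) else 0)
      - (if i = j + 1 then (if t = C n \<and> j + 1 = n then 2 else 1) * c (j + 1) else 0))"
    by (rule sum.cong) (auto simp: cartan_chain[OF assms(1)])
  also have "\<dots> = 2 * c j
    - (if 1 < j then (if t = B n \<and> j = n then 2 else 1) * c (j - 1) else 0)
    - (if j < n then (if t = C n \<and> j + 1 = n then 2 else 1) * c (j + 1) else 0)"
    using assms(2) by (auto simp: sum_subtractf)
  finally show ?thesis .
qed

lemma B_twice_fundamental_weight_in_root_lattice:
  assumes "2 \<le> n" "i \<in> {1..n}"
  shows "(\<lambda>j. 2 * \<omega> i j) \<in> root_lattice (B n)"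
proof (rule root_latticeI[where c = "\<lambda>k. if i = n then int k else 2 * int (min i k)"])
  fix j assume "j \<in> {1..rank (B n)}"
  then show "2 * \<omega> i j = simple_root_comb (B n) (\<lambda>k. if i = n then int k else 2 * int (min i k)) j"
    using assms by (subst simple_root_comb_chain) (auto simp: fundamental_weight_def min_def)
qed (use assms in \<open>auto simp: weights_def fundamental_weight_def\<close>)

lemma C_twice_fundamental_weight_in_root_lattice:
  assumes "2 \<le> n" "i \<in> {1..n}"
  shows "(\<lambda>j. 2 * \<omega> i j) \<in> root_lattice (C n)"
proof (rule root_latticeI[where c = "\<lambda>k. if k < n then 2 * int (min i k) else int i"])
  fix j assume "j \<in> {1..rank (C n)}"
  then show "2 * \<omega> i j = simple_root_comb (C n) (\<lambda>k. if k < n then 2 * int (min i k) else int i) j"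
    using assms by (subst simple_root_comb_chain) (auto simp: fundamental_weight_def min_def)
qed (use assms in \<open>auto simp: weights_def fundamental_weight_def\<close>)

lemma card_Psi_min_B: "2 \<le> n \<Longrightarrow> card (Psi_min (B n)) = n"
  using card_Psi_min_exponent_two[of "B n"] B_twice_fundamental_weight_in_root_lattice[of n] by simp

lemma card_Psi_min_C: "2 \<le> n \<Longrightarrow> card (Psi_min (C n)) = n"
  using card_Psi_min_exponent_two[of "C n"] C_twice_fundamental_weight_in_root_lattice[of n] by simp

lemma cartan_A_sym: "cartan (A n) i j = cartan (A n) j i"
  using cartan_chain[of "A n" n] by simp

lemma simple_root_comb_A:
  assumes "j \<in> {1..n}" "c 0 = 0" "c (n + 1) = 0"
  shows "simple_root_comb (A n) c j = 2 * c j - c (j - 1) - c (j + 1)"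
  using assms by (auto simp: simple_root_comb_chain)

lemma A_multiple_fundamental_weight_in_root_lattice:
  assumes i: "i \<in> {1..n}"
  shows "(\<lambda>j. int (n + 1) * \<omega> i j) \<in> root_lattice (A n)"
proof -
  define c where "c k = int (min i k) * (int (n + 1) - int (max i k))" for k
  have "int (n + 1) * \<omega> i j = 2 * c j - c (j - 1) - c (j + 1)" if j: "j \<in> {1..n}" for j
  proof -
    consider "j < i" | "j = i" | "i < j" by linarith
    then show ?thesis
    proof cases
      case 1
      then have "c j = int j * (int n + 1 - int i)" "c (j - 1) = (int j - 1) * (int n + 1 - int i)"
        "c (j + 1) = (int j + 1) * (int n + 1 - int i)"
        using j by (auto simp: c_def algebra_simps)
      then show ?thesis using 1 by (simp add: fundamental_weight_def algebra_simps)
    next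
      case 2
      then have "c j = int i * (int n + 1 - int i)" "c (j - 1) = (int i - 1) * (int n + 1 - int i)"
        "c (j + 1) = int i * (int n - int i)"
        using i by (auto simp: c_def)
      then show ?thesis using 2 by (simp add: fundamental_weight_def algebra_simps)
    next
      case 3
      then have "c j = int i * (int n + 1 - int j)" "c (j - 1) = int i * (int n + 2 - int j)"
        "c (j + 1) = int i * (int n - int j)"
        using j by (auto simp: c_def)
      then show ?thesis using 3 by (simp add: fundamental_weight_def algebra_simps)
    qed
  qed
  moreover have "c 0 = 0" "c (n + 1) = 0"
    using i by (auto simp: c_def)
  ultimately show ?thesis
    using i by (intro root_latticeI[where c = c]) (auto simp: simple_root_comb_A weights_def fundamental_weight_def)
qed

lemma A_linear_form_dvd:
  "\<forall>i\<in>{1..rank (A n)}. int (n + 1) dvd (\<Sum>j\<in>{1..rank (A n)}. int j * cartan (A n) i j)"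
proof
  fix i assume "i \<in> {1..rank (A n)}"
  then have i: "i \<in> {1..n}" by simp
  have "(\<Sum>j\<in>{1..rank (A n)}. int j * cartan (A n) i j) = simple_root_comb (A n) int i"
    using i by (simp add: simple_root_comb_def cartan_A_sym)
  also have "\<dots> = (if i = n then int (n + 1) else 0)"
    using i by (auto simp: simple_root_comb_chain)
  finally show "int (n + 1) dvd (\<Sum>j\<in>{1..rank (A n)}. int j * cartan (A n) i j)" by simp
qed

lemma A_omega_1_plus_omega_n_in_Psi_min:
  assumes n: "2 \<le> n"
  shows "(\<lambda>j. \<omega> 1 j + \<omega> n j) \<in> Psi_min (A n)"
proof (rule Psi_minI)
  let ?e = "\<lambda>j. \<omega> 1 j + \<omega> n j"
  have "(\<lambda>j. 2 * ?e j) \<in> root_lattice (A n)"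
  proof (rule root_latticeI[where c = "\<lambda>_. 2"])
    fix j assume "j \<in> {1..rank (A n)}"
    then show "2 * ?e j = simple_root_comb (A n) (\<lambda>_. 2) j"
      using n by (auto simp: simple_root_comb_chain fundamental_weight_def)
  qed (use n in \<open>auto simp: weights_def fundamental_weight_def\<close>)
  then show "?e \<in> Psi (A n)"
    using n by (intro PsiI) (auto simp: weights_def fundamental_weight_def)
  show "?e \<noteq> (\<lambda>j. 0)"
    using fun_cong[of ?e "\<lambda>j. 0" 1] by (auto simp: fundamental_weight_def split: if_splits)
  fix v assume v: "v \<in> Psi (A n) - {\<lambda>i. 0}" "v \<le> ?e"
  have v_off: "v j = 0" if "j \<noteq> 1" "j \<noteq> n" for j
    using le_funD[OF v(2), of j] Psi_nonneg[of v "A n" j] v(1) that by (simp add: fundamental_weight_def)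
  have v_ends: "v 1 \<in> {0, 1}" "v n \<in> {0, 1}"
    using le_funD[OF v(2), of 1] le_funD[OF v(2), of n] Psi_nonneg[of v "A n" 1]
      Psi_nonneg[of v "A n" n] v(1) n
    by (auto simp: fundamental_weight_def)
  have "(\<Sum>j\<in>{1..n}. int j * (2 * v j)) = (\<Sum>j\<in>{1..n}. (if j = 1 then 2 * v 1 else 0) + (if j = n then 2 * int n * v n else 0))"
    using n v_off by (intro sum.cong) auto
  also have "\<dots> = 2 * v 1 + 2 * int n * v n"
    using n by (simp add: sum.distrib)
  finally have "int (n + 1) dvd 2 * v 1 + 2 * int n * v n"
    using root_lattice_dvd_linear_form[OF A_linear_form_dvd, of "\<lambda>j. 2 * v j" n] v(1)
    by (simp add: Psi_def)
  moreover have "\<not> int (n + 1) dvd 2"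
    using n zdvd_imp_le[of "int (n + 1)" 2] by auto
  moreover have "\<not> int (n + 1) dvd 2 * int n"
  proof
    assume "int (n + 1) dvd 2 * int n"
    from dvd_diff[OF dvd_triv_right[of "int (n + 1)" 2] this]
    have "int (n + 1) dvd 2 * int (n + 1) - 2 * int n" .
    then show False using \<open>\<not> int (n + 1) dvd 2\<close> by simp
  qed
  moreover have "v 1 \<noteq> 0 \<or> v n \<noteq> 0"
  proof (rule ccontr)
    assume "\<not> (v 1 \<noteq> 0 \<or> v n \<noteq> 0)"
    then have "v j = 0" for j
      using v_off[of j] by (cases "j = 1"; cases "j = n") auto
    then show False using v(1) by auto
  qed
  ultimately have "v 1 = 1" "v n = 1"
    using v_ends by auto
  then show "v = ?e"
    using v_off n by (auto simp: fundamental_weight_def)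
qed

lemma card_Psi_min_A_ge:
  assumes n: "2 \<le> n"
  shows "n + 1 \<le> card (Psi_min (A n))"
proof -
  have N_Psi: "(\<lambda>j. int (n + 1) * \<omega> i j) \<in> Psi (A n)" if "i \<in> {1..n}" for i
    using that root_lattice_scale[OF A_multiple_fundamental_weight_in_root_lattice[OF that], of 2]
    by (intro fundamental_weight_in_Psi) auto
  define k where "k i = (LEAST k. 0 < k \<and> (\<lambda>j. int k * \<omega> i j) \<in> Psi (A n))" for i
  define u where "u i = (\<lambda>j. int (k i) * \<omega> i j)" for i
  have u_min: "u i \<in> Psi_min (A n)" if "i \<in> {1..n}" for i
    unfolding u_def k_def using least_fundamental_multiple_in_Psi_min[OF _ N_Psi[OF that]] by simp
  have k_pos: "0 < k i" if "i \<in> {1..n}" for i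
    using u_min[OF that] Psi_minD(2) scaled_fundamental_weight_eq_0_iff[of "int (k i)" i]
    unfolding u_def by fastforce
  let ?e = "\<lambda>j. \<omega> 1 j + \<omega> n j"
  have "inj_on u {1..n}"
  proof (rule inj_onI)
    fix i i' assume i: "i \<in> {1..n}" and "u i = u i'"
    from fun_cong[OF this(2), of i] show "i = i'"
      using k_pos[OF i] by (auto simp: u_def fundamental_weight_def split: if_splits)
  qed
  moreover have "?e \<notin> u ` {1..n}"
  proof
    assume "?e \<in> u ` {1..n}"
    then obtain i where "?e = u i" by blast
    from fun_cong[OF this, of 1] fun_cong[OF this, of n] show False
      using n by (auto simp: u_def fundamental_weight_def split: if_splits)
  qed
  ultimately have "n + 1 = card (insert ?e (u ` {1..n}))"
    by (simp add: card_image)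
  also have "\<dots> \<le> card (Psi_min (A n))"
  proof (rule card_mono)
    show "finite (Psi_min (A n))"
      using N_Psi by (intro finite_Psi_min[of "int (n + 1)"]) auto
    show "insert ?e (u ` {1..n}) \<subseteq> Psi_min (A n)"
      using u_min A_omega_1_plus_omega_n_in_Psi_min[OF n] by auto
  qed
  finally show ?thesis .
qed

section \<open>Type \<open>D\<close>\<close>

lemma cartan_D:
  assumes "4 \<le> n"
  shows "cartan (D n) i j = (if i = j then 2 else 0)
    - (if i + 1 = j \<and> j \<le> n - 1 then 1 else 0) - (if j + 1 = i \<and> j + 1 \<le> n - 1 then 1 else 0)
    - (if i = n \<and> j = n - 2 then 1 else 0) - (if i = n - 2 \<and> j = n then 1 else 0)"
proof -
  define m where "m = n - 2"
  have n: "n = m + 2" using assms by (simp add: m_def)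
  have "cartan (D n) i j = (if i = j then 2 else if dyn_adj (D n) i j then -1 else 0)"
    by (simp add: cartan_def)
  also have "dyn_adj (D n) i j \<longleftrightarrow> (i + 1 = j \<and> j \<le> m + 1) \<or> (j + 1 = i \<and> i \<le> m + 1)
      \<or> (i = m + 2 \<and> j = m) \<or> (i = m \<and> j = m + 2)"
    unfolding n by (auto simp: chain_adj_def doubleton_eq_iff)
  finally show ?thesis
    unfolding n by simp
qed

lemma cartan_D_sym: "cartan (D n) i j = cartan (D n) j i"
proof -
  have "dyn_adj (D n) i j = dyn_adj (D n) j i"
    by (auto simp: chain_adj_def insert_commute)
  then show ?thesis by (simp add: cartan_def)
qed

lemma simple_root_comb_D:
  assumes "4 \<le> n" "j \<in> {1..n}" "c 0 = 0"
  shows "simple_root_comb (D n) c j = 2 * c j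
    - (if j \<le> n - 1 then c (j - 1) else 0) - (if j + 1 \<le> n - 1 then c (j + 1) else 0)
    - (if j = n - 2 then c n else 0) - (if j = n then c (n - 2) else 0)"
proof -
  have mult_if: "x * (if P then a else 0) = (if P then x * a else 0)" for x a :: int and P
    by simp
  have at: "(\<Sum>i\<in>{1..n}. if i = k \<and> P then f i else 0) = (if k \<in> {1..n} \<and> P then f k else 0)"
    for k P and f :: "nat \<Rightarrow> int"
    by (cases P) (simp_all add: sum.delta[OF finite_atLeastAtMost])
  have pred: "(\<Sum>i\<in>{1..n}. if i + 1 = j \<and> P then f i else 0) = (if 2 \<le> j \<and> P then f (j - 1) else 0)"
    for P and f :: "nat \<Rightarrow> int"
  proof -
    have "(\<Sum>i\<in>{1..n}. if i + 1 = j \<and> P then f i else 0)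
        = (\<Sum>i\<in>{1..n}. if i = j - 1 \<and> (2 \<le> j \<and> P) then f i else 0)"
      by (rule sum.cong) auto
    then show ?thesis unfolding at using assms(2) by auto
  qed
  have succ: "(\<Sum>i\<in>{1..n}. if j + 1 = i \<and> P then f i else 0) = (if j + 1 \<le> n \<and> P then f (j + 1) else 0)"
    for P and f :: "nat \<Rightarrow> int"
  proof -
    have "(\<Sum>i\<in>{1..n}. if j + 1 = i \<and> P then f i else 0)
        = (\<Sum>i\<in>{1..n}. if i = j + 1 \<and> P then f i else 0)"
      by (rule sum.cong) auto
    then show ?thesis unfolding at by auto
  qed
  have "simple_root_comb (D n) c j = (\<Sum>i\<in>{1..n}. c i * cartan (D n) i j)"
    using assms(2) by (simp add: simple_root_comb_def)
  also have "\<dots> = (\<Sum>i\<in>{1..n}. (if i = j \<and> True then c i * 2 else 0)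
      - (if i + 1 = j \<and> j \<le> n - 1 then c i else 0) - (if j + 1 = i \<and> j + 1 \<le> n - 1 then c i else 0)
      - (if i = n \<and> j = n - 2 then c i else 0) - (if i = n - 2 \<and> j = n then c i else 0))"
    by (simp only: cartan_D[OF assms(1)] right_diff_distrib mult_if mult_1_right simp_thms)
  also have "\<dots> = 2 * c j
    - (if j \<le> n - 1 then c (j - 1) else 0) - (if j + 1 \<le> n - 1 then c (j + 1) else 0)
    - (if j = n - 2 then c n else 0) - (if j = n then c (n - 2) else 0)"
    unfolding sum_subtractf at pred succ using assms by auto
  finally show ?thesis .
qed

text \<open>In type \<open>D\<^sub>n\<close> a combination of simple roots is given by its coefficients \<open>p\<close> along the
  chain \<open>\<alpha>\<^sub>1, \<dots>, \<alpha>\<^sub>n\<^sub>-\<^sub>2\<close> and its coefficients \<open>x, y\<close> at the two spin nodes.\<close>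
lemma D_root_latticeI:
  assumes n: "4 \<le> n" and w: "w \<in> weights (D n)" and "p 0 = 0"
    and chain: "\<And>j. j \<in> {1..n - 3} \<Longrightarrow> w j = 2 * p j - p (j - 1) - p (j + 1)"
    and fork: "w (n - 2) = 2 * p (n - 2) - p (n - 3) - x - y"
    and spin: "w (n - 1) = 2 * x - p (n - 2)" "w n = 2 * y - p (n - 2)"
  shows "w \<in> root_lattice (D n)"
proof (rule root_latticeI[OF w])
  let ?c = "\<lambda>k. if k \<le> n - 2 then p k else if k = n - 1 then x else y"
  define m where "m = n - 2"
  have m: "n = m + 2" "2 \<le> m" using n by (simp_all add: m_def)
  fix j assume "j \<in> {1..rank (D n)}"
  then consider "j \<in> {1..m - 1}" | "j = m" | "j = m + 1" | "j = m + 2" using m by fastforce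
  then show "w j = simple_root_comb (D n) ?c j"
  proof cases
    case 1
    then show ?thesis using chain[of j] n \<open>p 0 = 0\<close> unfolding m(1) by (subst simple_root_comb_D) auto
  next
    case 2
    then show ?thesis using fork n \<open>p 0 = 0\<close> unfolding m(1) by (subst simple_root_comb_D) auto
  next
    case 3
    then show ?thesis using spin n \<open>p 0 = 0\<close> unfolding m(1) by (subst simple_root_comb_D) auto
  next
    case 4
    then show ?thesis using spin n \<open>p 0 = 0\<close> unfolding m(1) by (subst simple_root_comb_D) auto
  qed
qed

lemma D_twice_fundamental_weight_in_root_lattice:
  assumes n: "4 \<le> n" and i: "i \<in> {1..n - 2}"
  shows "(\<lambda>j. 2 * \<omega> i j) \<in> root_lattice (D n)"
proof (rule D_root_latticeI[OF n, where p = "\<lambda>k. 2 * int (min i k)" and x = "int i" and y = "int i"])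
  fix j assume "j \<in> {1..n - 3}"
  then show "2 * \<omega> i j = 2 * (2 * int (min i j)) - 2 * int (min i (j - 1)) - 2 * int (min i (j + 1))"
    by (auto simp: fundamental_weight_def min_def)
qed (use n i in \<open>auto simp: weights_def fundamental_weight_def min_def\<close>)

lemma D_even_twice_spin_weights_in_root_lattice:
  assumes n: "n = 2 * m + 2" "1 \<le> m"
  shows "(\<lambda>j. 2 * \<omega> (n - 1) j) \<in> root_lattice (D n)" "(\<lambda>j. 2 * \<omega> n j) \<in> root_lattice (D n)"
proof -
  have n4: "4 \<le> n" using n by simp
  show "(\<lambda>j. 2 * \<omega> (n - 1) j) \<in> root_lattice (D n)"
    by (rule D_root_latticeI[OF n4, where p = int and x = "int m + 1" and y = "int m"])
      (use n in \<open>auto simp: weights_def fundamental_weight_def\<close>)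
  show "(\<lambda>j. 2 * \<omega> n j) \<in> root_lattice (D n)"
    by (rule D_root_latticeI[OF n4, where p = int and x = "int m" and y = "int m + 1"])
      (use n in \<open>auto simp: weights_def fundamental_weight_def\<close>)
qed

lemma D_spin_weight_multiples_in_root_lattice:
  assumes n: "4 \<le> n"
  shows "(\<lambda>j. 2 * (\<omega> (n - 1) j + \<omega> n j)) \<in> root_lattice (D n)"
    "(\<lambda>j. 4 * \<omega> (n - 1) j) \<in> root_lattice (D n)"
proof -
  show "(\<lambda>j. 2 * (\<omega> (n - 1) j + \<omega> n j)) \<in> root_lattice (D n)"
    by (rule D_root_latticeI[OF n, where p = "\<lambda>k. 2 * int k" and x = "int n - 1" and y = "int n - 1"])
      (use n in \<open>auto simp: weights_def fundamental_weight_def\<close>)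
  show "(\<lambda>j. 4 * \<omega> (n - 1) j) \<in> root_lattice (D n)"
    by (rule D_root_latticeI[OF n, where p = "\<lambda>k. 2 * int k" and x = "int n" and y = "int n - 2"])
      (use n in \<open>auto simp: weights_def fundamental_weight_def\<close>)
qed

lemma card_Psi_min_D_even:
  assumes "n = 2 * m + 2" "1 \<le> m"
  shows "card (Psi_min (D n)) = n"
proof -
  have "\<forall>i\<in>{1..rank (D n)}. (\<lambda>j. 2 * \<omega> i j) \<in> root_lattice (D n)"
  proof
    fix i assume "i \<in> {1..rank (D n)}"
    then have "i \<in> {1..n - 2} \<or> i = n - 1 \<or> i = n" by auto
    then show "(\<lambda>j. 2 * \<omega> i j) \<in> root_lattice (D n)"
      using D_twice_fundamental_weight_in_root_lattice[of n i] D_even_twice_spin_weights_in_root_lattice[OF assms] assms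
      by auto
  qed
  then show ?thesis using card_Psi_min_exponent_two by fastforce
qed

definition D_odd_form :: "nat \<Rightarrow> nat \<Rightarrow> int" where
  "D_odd_form n j = (if j \<le> n - 2 then if odd j then 2 else 0 else if j = n - 1 then 1 else -1)"

lemma D_odd_linear_form_dvd:
  assumes n: "n = 2 * m + 3" "1 \<le> m"
  shows "\<forall>i\<in>{1..rank (D n)}. 4 dvd (\<Sum>j\<in>{1..rank (D n)}. D_odd_form n j * cartan (D n) i j)"
proof
  fix i assume i: "i \<in> {1..rank (D n)}"
  define k where "k = 2 * m + 1"
  have n': "n = k + 2" "4 \<le> n" "odd k" using n by (simp_all add: k_def)
  have "(\<Sum>j\<in>{1..rank (D n)}. D_odd_form n j * cartan (D n) i j)
      = simple_root_comb (D n) (D_odd_form n) i"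
    using i by (simp add: simple_root_comb_def cartan_D_sym)
  moreover from i consider "i \<in> {1..k - 1}" | "i = k" | "i = k + 1" | "i = k + 2" using n' by fastforce
  then have "4 dvd simple_root_comb (D n) (D_odd_form n) i"
    by cases (use n' in \<open>auto simp: simple_root_comb_D D_odd_form_def\<close>)
  ultimately show "4 dvd (\<Sum>j\<in>{1..rank (D n)}. D_odd_form n j * cartan (D n) i j)" by simp
qed

lemma Psi_D_odd_iff:
  assumes n: "n = 2 * m + 3" "1 \<le> m"
  shows "w \<in> Psi (D n) \<longleftrightarrow> w \<in> dominant (D n) \<and> even (w (n - 1) + w n)"
proof
  have n4: "4 \<le> n" using n by simp
  assume w: "w \<in> Psi (D n)"
  let ?g = "D_odd_form n"
  have total: "4 dvd (\<Sum>j\<in>{1..n}. ?g j * (2 * w j))"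
    using root_lattice_dvd_linear_form[OF D_odd_linear_form_dvd[OF n], of "\<lambda>j. 2 * w j"] w
    by (simp add: Psi_def)
  have "{1..n} = insert n (insert (n - 1) {1..n - 2})"
    and "n \<notin> insert (n - 1) {1..n - 2}" "n - 1 \<notin> {1..n - 2}" using n4 by auto
  moreover have "?g (n - 1) = 1" "?g n = -1" using n4 by (auto simp: D_odd_form_def)
  ultimately have split: "(\<Sum>j\<in>{1..n}. ?g j * (2 * w j))
      = (\<Sum>j\<in>{1..n - 2}. ?g j * (2 * w j)) + (2 * w (n - 1) - 2 * w n)"
    by simp
  have "4 dvd (\<Sum>j\<in>{1..n - 2}. ?g j * (2 * w j))"
    by (intro dvd_sum) (auto simp: D_odd_form_def)
  from dvd_add_right_iff[OF this] total have "4 dvd 2 * w (n - 1) - 2 * w n"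
    unfolding split by simp
  then have "even (w (n - 1) + w n)" by presburger
  with w show "w \<in> dominant (D n) \<and> even (w (n - 1) + w n)" by (simp add: Psi_def)
next
  have n4: "4 \<le> n" using n by simp
  assume h: "w \<in> dominant (D n) \<and> even (w (n - 1) + w n)"
  then have w: "w \<in> dominant (D n)" by simp
  from h have "even (w (n - 1) - w n)" by simp
  then obtain k where k: "w (n - 1) - w n = 2 * k" by (rule evenE)
  have "(\<lambda>j. 2 * w j) = (\<lambda>j. (\<Sum>i\<in>{1..n - 2}. w i * (2 * \<omega> i j))
      + w n * (2 * (\<omega> (n - 1) j + \<omega> n j)) + k * (4 * \<omega> (n - 1) j))"
  proof
    fix j
    have "(\<Sum>i\<in>{1..n - 2}. w i * (2 * \<omega> i j)) = (\<Sum>i\<in>{1..n - 2}. if i = j then 2 * w j else 0)"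
      by (rule sum.cong) (auto simp: fundamental_weight_def)
    also have "\<dots> = (if j \<in> {1..n - 2} then 2 * w j else 0)"
      by simp
    finally have "(\<Sum>i\<in>{1..n - 2}. w i * (2 * \<omega> i j)) = (if j \<in> {1..n - 2} then 2 * w j else 0)" .
    moreover have "j \<in> {1..n - 2} \<or> j = n - 1 \<or> j = n \<or> j \<notin> {1..n}" using n4 by auto
    ultimately show "2 * w j = (\<Sum>i\<in>{1..n - 2}. w i * (2 * \<omega> i j))
        + w n * (2 * (\<omega> (n - 1) j + \<omega> n j)) + k * (4 * \<omega> (n - 1) j)"
      using w k n4 by (auto simp: fundamental_weight_def dominant_def weights_def)
  qed
  also have "\<dots> \<in> root_lattice (D n)"
  proof (intro root_lattice_add)
    show "(\<lambda>j. \<Sum>i\<in>{1..n - 2}. w i * (2 * \<omega> i j)) \<in> root_lattice (D n)"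
      using D_twice_fundamental_weight_in_root_lattice[OF n4]
      by (intro root_lattice_sum[where f = "\<lambda>i j. 2 * \<omega> i j"]) auto
    show "(\<lambda>j. w n * (2 * (\<omega> (n - 1) j + \<omega> n j))) \<in> root_lattice (D n)"
      by (rule root_lattice_scale[OF D_spin_weight_multiples_in_root_lattice(1)[OF n4]])
    show "(\<lambda>j. k * (4 * \<omega> (n - 1) j)) \<in> root_lattice (D n)"
      by (rule root_lattice_scale[OF D_spin_weight_multiples_in_root_lattice(2)[OF n4]])
  qed
  finally show "w \<in> Psi (D n)" using w by (simp add: Psi_def)
qed

lemma Psi_min_D_odd:
  assumes n: "n = 2 * m + 3" "1 \<le> m"
  shows "Psi_min (D n) = insert (\<lambda>j. 2 * \<omega> (n - 1) j) (insert (\<lambda>j. 2 * \<omega> n j)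
    (insert (\<lambda>j. \<omega> (n - 1) j + \<omega> n j) (\<omega> ` {1..n - 2})))"
    (is "_ = insert ?a (insert ?b (insert ?c ?F))")
proof (rule Psi_min_eqI)
  have n4: "4 \<le> n" using n by simp
  have "?F \<subseteq> Psi (D n)"
    using fundamental_weight_in_Psi[of _ "D n" 1] D_twice_fundamental_weight_in_root_lattice[OF n4] by auto
  moreover have "?a \<in> Psi (D n)" "?b \<in> Psi (D n)" "?c \<in> Psi (D n)"
    using n4 by (auto simp: Psi_D_odd_iff[OF n] dominant_def weights_def fundamental_weight_def)
  moreover have "?a \<noteq> (\<lambda>j. 0)" "?b \<noteq> (\<lambda>j. 0)" "?c \<noteq> (\<lambda>j. 0)"
    using fun_cong[of ?a "\<lambda>j. 0" "n - 1"] fun_cong[of ?b "\<lambda>j. 0" n] fun_cong[of ?c "\<lambda>j. 0" n] n4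
    by (auto simp: fundamental_weight_def split: if_splits)
  ultimately show "insert ?a (insert ?b (insert ?c ?F)) \<subseteq> Psi (D n) - {\<lambda>j. 0}"
    using fundamental_weight_ne_0 by auto
next
  have n4: "4 \<le> n" using n by simp
  fix w assume w: "w \<in> Psi (D n) - {\<lambda>j. 0}"
  have nonneg: "0 \<le> w j" for j using w Psi_nonneg by blast
  have parity: "even (w (n - 1) + w n)" using w Psi_D_odd_iff[OF n] by blast
  show "\<exists>s\<in>insert ?a (insert ?b (insert ?c ?F)). s \<le> w"
  proof (cases "\<exists>i\<in>{1..n - 2}. 1 \<le> w i")
    case True
    then obtain i where "i \<in> {1..n - 2}" "\<omega> i \<le> w"
      using fundamental_weight_le_iff[of w 1] nonneg by auto
    then show ?thesis by blast
  next
    case no_chain: False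
    obtain j where j: "j \<in> {1..n}" "1 \<le> w j" using w by (rule Psi_nonzero_coordinate) simp
    have off: "w i = 0" if "i \<noteq> n - 1" "i \<noteq> n" for i
    proof (cases "i \<in> {1..n - 2}")
      case True
      then have "\<not> 1 \<le> w i" using no_chain by blast
      then show ?thesis using nonneg[of i] by linarith
    next
      case False
      then show ?thesis using Psi_outside_rank[of w "D n" i] w that by auto
    qed
    have "j = n - 1 \<or> j = n" using j off[of j] by fastforce
    then have "1 \<le> w (n - 1) \<or> 1 \<le> w n" using j by auto
    then have "(1 \<le> w (n - 1) \<and> 1 \<le> w n) \<or> 2 \<le> w (n - 1) \<or> 2 \<le> w n"
      using nonneg[of "n - 1"] nonneg[of n] parity by presburger
    then consider "1 \<le> w (n - 1)" "1 \<le> w n" | "2 \<le> w (n - 1)" | "2 \<le> w n" by blast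
    then show ?thesis
    proof cases
      case 1
      then have "?c \<le> w" using nonneg n4 by (auto simp: le_fun_def fundamental_weight_def)
      then show ?thesis by blast
    next
      case 2
      then have "?a \<le> w" using nonneg by (auto simp: le_fun_def fundamental_weight_def)
      then show ?thesis by blast
    next
      case 3
      then have "?b \<le> w" using nonneg by (auto simp: le_fun_def fundamental_weight_def)
      then show ?thesis by blast
    qed
  qed
next
  have n4: "4 \<le> n" using n by simp
  fix s s' assume s: "s \<in> insert ?a (insert ?b (insert ?c ?F))"
    and s': "s' \<in> insert ?a (insert ?b (insert ?c ?F))" and "s \<le> s'"
  then have le: "s x \<le> s' x" for x by (simp add: le_funD)
  from s show "s = s'"
  proof (elim insertE imageE)
    assume "s = ?a" then show ?thesis using s' le[of "n - 1"] n4 by (auto simp: fundamental_weight_def split: if_splits)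
  next
    assume "s = ?b" then show ?thesis using s' le[of n] n4 by (auto simp: fundamental_weight_def split: if_splits)
  next
    assume "s = ?c" then show ?thesis using s' le[of "n - 1"] le[of n] n4 by (auto simp: fundamental_weight_def split: if_splits)
  next
    fix i assume "s = \<omega> i" "i \<in> {1..n - 2}"
    then show ?thesis using s' le[of i] n4 by (auto simp: fundamental_weight_def split: if_splits)
  qed
qed

lemma card_Psi_min_D_odd:
  assumes n: "n = 2 * m + 3" "1 \<le> m"
  shows "card (Psi_min (D n)) = n + 1"
proof -
  have n4: "4 \<le> n" using n by simp
  let ?a = "\<lambda>j. 2 * \<omega> (n - 1) j" and ?b = "\<lambda>j. 2 * \<omega> n j" and ?c = "\<lambda>j. \<omega> (n - 1) j + \<omega> n j"
  have "?c \<notin> \<omega> ` {1..n - 2}"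
  proof
    assume "?c \<in> \<omega> ` {1..n - 2}"
    then obtain i where "i \<in> {1..n - 2}" "?c = \<omega> i" by blast
    from fun_cong[OF this(2), of n] show False
      using \<open>i \<in> {1..n - 2}\<close> n4 by (auto simp: fundamental_weight_def split: if_splits)
  qed
  moreover have "?b \<notin> insert ?c (\<omega> ` {1..n - 2})"
  proof
    assume "?b \<in> insert ?c (\<omega> ` {1..n - 2})"
    then obtain f where f: "f = ?c \<or> (\<exists>i \<in> {1..n - 2}. f = \<omega> i)" and eq: "?b = f" by blast
    from fun_cong[OF eq, of n] have "?b n = f n" .
    then show False
      using f n4 by (auto simp: fundamental_weight_def split: if_splits)
  qed
  moreover have "?a \<notin> insert ?b (insert ?c (\<omega> ` {1..n - 2}))"
  proof
    assume "?a \<in> insert ?b (insert ?c (\<omega> ` {1..n - 2}))"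
    then obtain f where f: "f = ?b \<or> f = ?c \<or> (\<exists>i \<in> {1..n - 2}. f = \<omega> i)" and eq: "?a = f" by blast
    from fun_cong[OF eq, of "n - 1"] have "?a (n - 1) = f (n - 1)" .
    then show False
      using f n4 by (auto simp: fundamental_weight_def split: if_splits)
  qed
  moreover have "card (\<omega> ` {1..n - 2}) = n - 2"
    using inj_fundamental_weight by (simp add: card_image inj_on_subset)
  ultimately show ?thesis
    using n4 by (simp add: Psi_min_D_odd[OF n])
qed

lemma card_Psi_min_D:
  assumes "4 \<le> n"
  shows "card (Psi_min (D n)) = (if even n then n else n + 1)"
proof (cases "even n")
  case True
  then have "\<exists>m. n = 2 * m + 2 \<and> 1 \<le> m" using assms by presburger
  then show ?thesis using True card_Psi_min_D_even by auto
next
  case False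
  then have "\<exists>m. n = 2 * m + 3 \<and> 1 \<le> m" using assms by presburger
  then show ?thesis using False card_Psi_min_D_odd by auto
qed

section \<open>Type \<open>E\<^sub>6\<close>\<close>

definition weight_of_list :: "int list \<Rightarrow> nat \<Rightarrow> int" where
  "weight_of_list xs i = (if 1 \<le> i \<and> i \<le> length xs then xs ! (i - 1) else 0)"

lemma weight_of_list_Suc: "k < length xs \<Longrightarrow> weight_of_list xs (Suc k) = xs ! k"
  by (simp add: weight_of_list_def)

lemma weight_of_list_nonneg: "\<forall>x\<in>set xs. 0 \<le> x \<Longrightarrow> 0 \<le> weight_of_list xs i"
  using nth_mem[of "i - 1" xs] by (auto simp: weight_of_list_def)

lemma weight_of_list_in_weights: "length xs = rank t \<Longrightarrow> weight_of_list xs \<in> weights t"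
  by (simp add: weights_def weight_of_list_def)

lemma weight_of_list_le_iff:
  assumes "length xs = length ys"
  shows "weight_of_list xs \<le> weight_of_list ys \<longleftrightarrow> list_all2 (\<le>) xs ys"
proof
  assume "weight_of_list xs \<le> weight_of_list ys"
  then have "xs ! k \<le> ys ! k" if "k < length xs" for k
    using le_funD[of "weight_of_list xs" "weight_of_list ys" "Suc k"] that assms
    by (simp add: weight_of_list_Suc)
  then show "list_all2 (\<le>) xs ys" using assms by (simp add: list_all2_conv_all_nth)
next
  assume "list_all2 (\<le>) xs ys"
  then show "weight_of_list xs \<le> weight_of_list ys"
    by (auto simp: le_fun_def weight_of_list_def list_all2_conv_all_nth)
qed

lemma weight_of_list_eq_iff:
  assumes "length xs = length ys"
  shows "weight_of_list xs = weight_of_list ys \<longleftrightarrow> xs = ys"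
proof
  assume "weight_of_list xs = weight_of_list ys"
  then have "list_all2 (\<le>) xs ys" "list_all2 (\<le>) ys xs"
    using weight_of_list_le_iff assms by (metis order_refl)+
  then show "xs = ys"
    by (auto simp: list_all2_conv_all_nth intro!: nth_equalityI intro: order_antisym)
qed simp

lemma weight_of_list_eq_0_iff: "weight_of_list xs = (\<lambda>i. 0) \<longleftrightarrow> (\<forall>x\<in>set xs. x = 0)"
proof
  assume zero: "weight_of_list xs = (\<lambda>i. 0)"
  have "xs ! k = 0" if "k < length xs" for k
    using fun_cong[OF zero, of "Suc k"] that by (simp add: weight_of_list_Suc)
  then show "\<forall>x\<in>set xs. x = 0" by (metis in_set_conv_nth)
next
  assume zero: "\<forall>x\<in>set xs. x = 0"
  show "weight_of_list xs = (\<lambda>i. 0)"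
  proof
    fix i show "weight_of_list xs i = 0"
      using zero nth_mem[of "i - 1" xs] by (auto simp: weight_of_list_def)
  qed
qed

lemma weight_of_list_in_root_lattice:
  assumes "length xs = rank t"
    and "\<forall>j\<in>{1..rank t}. (\<Sum>k\<in>{1..rank t}. cs ! (k - 1) * cartan t k j) = xs ! (j - 1)"
  shows "weight_of_list xs \<in> root_lattice t"
  by (rule root_latticeI[where c = "\<lambda>k. cs ! (k - 1)"])
    (use assms in \<open>auto simp: weight_of_list_in_weights weight_of_list_def simple_root_comb_def\<close>)

lemma E6_root_lattice_generators:
  "weight_of_list [0, 2, 0, 0, 0, 0] \<in> root_lattice E6"
  "weight_of_list [0, 0, 0, 2, 0, 0] \<in> root_lattice E6"
  "weight_of_list [2, 0, 2, 0, 0, 0] \<in> root_lattice E6"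
  "weight_of_list [0, 0, 2, 0, 2, 0] \<in> root_lattice E6"
  "weight_of_list [0, 0, -2, 0, 0, 2] \<in> root_lattice E6"
  "weight_of_list [0, 0, 6, 0, 0, 0] \<in> root_lattice E6"
proof -
  note E6_simps = cartan_def numeral_eq_Suc atLeastAtMostSuc_conv doubleton_eq_iff
  show "weight_of_list [0, 2, 0, 0, 0, 0] \<in> root_lattice E6"
    by (rule weight_of_list_in_root_lattice[where cs = "[2, 4, 4, 6, 4, 2]"]) (simp_all add: E6_simps)
  show "weight_of_list [0, 0, 0, 2, 0, 0] \<in> root_lattice E6"
    by (rule weight_of_list_in_root_lattice[where cs = "[4, 6, 8, 12, 8, 4]"]) (simp_all add: E6_simps)
  show "weight_of_list [2, 0, 2, 0, 0, 0] \<in> root_lattice E6"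
    by (rule weight_of_list_in_root_lattice[where cs = "[6, 6, 10, 12, 8, 4]"]) (simp_all add: E6_simps)
  show "weight_of_list [0, 0, 2, 0, 2, 0] \<in> root_lattice E6"
    by (rule weight_of_list_in_root_lattice[where cs = "[6, 8, 12, 16, 12, 6]"]) (simp_all add: E6_simps)
  show "weight_of_list [0, 0, -2, 0, 0, 2] \<in> root_lattice E6"
    by (rule weight_of_list_in_root_lattice[where cs = "[-2, -2, -4, -4, -2, 0]"]) (simp_all add: E6_simps)
  show "weight_of_list [0, 0, 6, 0, 0, 0] \<in> root_lattice E6"
    by (rule weight_of_list_in_root_lattice[where cs = "[10, 12, 20, 24, 16, 8]"]) (simp_all add: E6_simps)
qed

lemma E6_linear_form_dvd:
  "\<forall>i\<in>{1..rank E6}. 3 dvd (\<Sum>j\<in>{1..rank E6}. weight_of_list [1, 0, -1, 0, 1, -1] j * cartan E6 i j)"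
  by (simp add: weight_of_list_def cartan_def numeral_eq_Suc atLeastAtMostSuc_conv doubleton_eq_iff)

lemma Psi_E6_iff:
  "weight_of_list [a, b, c, d, e, f] \<in> Psi E6 \<longleftrightarrow>
    (0 \<le> a \<and> 0 \<le> b \<and> 0 \<le> c \<and> 0 \<le> d \<and> 0 \<le> e \<and> 0 \<le> f) \<and> 3 dvd (a - c + e - f)"
  (is "?w \<in> Psi E6 \<longleftrightarrow> ?nonneg \<and> ?cong")
proof
  assume w: "?w \<in> Psi E6"
  have "?nonneg"
    using Psi_nonneg[OF w, of 1] Psi_nonneg[OF w, of 2] Psi_nonneg[OF w, of 3]
      Psi_nonneg[OF w, of 4] Psi_nonneg[OF w, of 5] Psi_nonneg[OF w, of 6]
    by (simp add: weight_of_list_def)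
  moreover have "3 dvd (\<Sum>j\<in>{1..rank E6}. weight_of_list [1, 0, -1, 0, 1, -1] j * (2 * ?w j))"
    using root_lattice_dvd_linear_form[OF E6_linear_form_dvd] w by (simp add: Psi_def)
  then have "3 dvd 2 * (a - c + e - f)"
    by (simp add: weight_of_list_def numeral_eq_Suc atLeastAtMostSuc_conv algebra_simps)
  then have "?cong" by presburger
  ultimately show "?nonneg \<and> ?cong" ..
next
  assume h: "?nonneg \<and> ?cong"
  then obtain k where "a - c + e - f = 3 * k" by auto
  then have k: "c - a - e + f = 3 * (- k)" by simp
  have "(\<lambda>j. 2 * ?w j) = (\<lambda>j. b * weight_of_list [0, 2, 0, 0, 0, 0] j + d * weight_of_list [0, 0, 0, 2, 0, 0] j
      + a * weight_of_list [2, 0, 2, 0, 0, 0] j + e * weight_of_list [0, 0, 2, 0, 2, 0] j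
      + f * weight_of_list [0, 0, -2, 0, 0, 2] j + (- k) * weight_of_list [0, 0, 6, 0, 0, 0] j)"
  proof
    fix j :: nat
    have "j = 0 \<or> 6 < j \<or> j = 1 \<or> j = 2 \<or> j = 3 \<or> j = 4 \<or> j = 5 \<or> j = 6" by auto
    then show "2 * ?w j = b * weight_of_list [0, 2, 0, 0, 0, 0] j + d * weight_of_list [0, 0, 0, 2, 0, 0] j
      + a * weight_of_list [2, 0, 2, 0, 0, 0] j + e * weight_of_list [0, 0, 2, 0, 2, 0] j
      + f * weight_of_list [0, 0, -2, 0, 0, 2] j + (- k) * weight_of_list [0, 0, 6, 0, 0, 0] j"
      using k by (elim disjE) (simp_all add: weight_of_list_def)
  qed
  also have "\<dots> \<in> root_lattice E6"
    using E6_root_lattice_generators by (intro root_lattice_add root_lattice_scale)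
  finally show "?w \<in> Psi E6"
    using h by (intro PsiI weight_of_list_nonneg) (auto simp: weight_of_list_in_weights)
qed

definition E6_minimal_coordinates :: "int list list" where
  "E6_minimal_coordinates =
    [[0, 1, 0, 0, 0, 0], [0, 0, 0, 1, 0, 0], [1, 0, 1, 0, 0, 0], [0, 0, 1, 0, 1, 0],
     [1, 0, 0, 0, 0, 1], [0, 0, 0, 0, 1, 1], [3, 0, 0, 0, 0, 0], [2, 0, 0, 0, 1, 0],
     [1, 0, 0, 0, 2, 0], [0, 0, 0, 0, 3, 0], [0, 0, 3, 0, 0, 0], [0, 0, 2, 0, 0, 1],
     [0, 0, 1, 0, 0, 2], [0, 0, 0, 0, 0, 3]]"

lemma E6_minimal_coordinates_cover:
  fixes a b c d e f :: int
  assumes nonneg: "0 \<le> a" "0 \<le> b" "0 \<le> c" "0 \<le> d" "0 \<le> e" "0 \<le> f"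
    and cong: "3 dvd (a - c + e - f)" and nonzero: "\<not> (a = 0 \<and> b = 0 \<and> c = 0 \<and> d = 0 \<and> e = 0 \<and> f = 0)"
  shows "\<exists>xs \<in> set E6_minimal_coordinates. list_all2 (\<le>) xs [a, b, c, d, e, f]"
proof -
  have "1 \<le> b \<or> 1 \<le> d \<or> (1 \<le> a \<and> 1 \<le> c) \<or> (1 \<le> c \<and> 1 \<le> e) \<or> (1 \<le> a \<and> 1 \<le> f)
    \<or> (1 \<le> e \<and> 1 \<le> f) \<or> 3 \<le> a \<or> (2 \<le> a \<and> 1 \<le> e) \<or> (1 \<le> a \<and> 2 \<le> e) \<or> 3 \<le> e
    \<or> 3 \<le> c \<or> (2 \<le> c \<and> 1 \<le> f) \<or> (1 \<le> c \<and> 2 \<le> f) \<or> 3 \<le> f"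
  proof (cases "1 \<le> b \<or> 1 \<le> d \<or> (1 \<le> a \<and> 1 \<le> c) \<or> (1 \<le> c \<and> 1 \<le> e) \<or> (1 \<le> a \<and> 1 \<le> f)
      \<or> (1 \<le> e \<and> 1 \<le> f)")
    case True
    then show ?thesis by blast
  next
    case no_pair: False
    then have "b = 0" "d = 0" using nonneg(2,4) by auto
    show ?thesis
    proof (cases "c = 0 \<and> f = 0")
      case True
      then have "3 dvd (a + e)" "0 < a + e" using cong nonzero nonneg \<open>b = 0\<close> \<open>d = 0\<close> by auto
      then have "3 \<le> a + e" by presburger
      then show ?thesis by linarith
    next
      case False
      then have "a = 0" "e = 0" using no_pair nonneg by auto
      then have "3 dvd (c + f)" using cong by presburger
      moreover have "0 < c + f" using False nonneg by auto
      ultimately have "3 \<le> c + f" by presburger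
      then show ?thesis by linarith
    qed
  qed
  then show ?thesis using nonneg by (simp add: E6_minimal_coordinates_def)
qed

lemma Psi_min_E6: "Psi_min E6 = weight_of_list ` set E6_minimal_coordinates"
proof (rule Psi_min_eqI)
  show "weight_of_list ` set E6_minimal_coordinates \<subseteq> Psi E6 - {\<lambda>i. 0}"
    by (auto simp: E6_minimal_coordinates_def Psi_E6_iff weight_of_list_eq_0_iff)
next
  fix w assume w: "w \<in> Psi E6 - {\<lambda>i. 0}"
  have w_eq: "w = weight_of_list [w 1, w 2, w 3, w 4, w 5, w 6]"
  proof
    fix j :: nat
    have "j = 0 \<or> 6 < j \<or> j = 1 \<or> j = 2 \<or> j = 3 \<or> j = 4 \<or> j = 5 \<or> j = 6" by auto
    then show "w j = weight_of_list [w 1, w 2, w 3, w 4, w 5, w 6] j"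
      using Psi_outside_rank[of w E6 j] w by (elim disjE) (simp_all add: weight_of_list_def)
  qed
  have "weight_of_list [w 1, w 2, w 3, w 4, w 5, w 6] \<in> Psi E6 - {\<lambda>i. 0}"
    unfolding w_eq[symmetric] using w .
  then have "(0 \<le> w 1 \<and> 0 \<le> w 2 \<and> 0 \<le> w 3 \<and> 0 \<le> w 4 \<and> 0 \<le> w 5 \<and> 0 \<le> w 6)
      \<and> 3 dvd (w 1 - w 3 + w 5 - w 6)"
    and "\<not> (w 1 = 0 \<and> w 2 = 0 \<and> w 3 = 0 \<and> w 4 = 0 \<and> w 5 = 0 \<and> w 6 = 0)"
    by (simp_all only: Psi_E6_iff Diff_iff singleton_iff weight_of_list_eq_0_iff) simp_all
  then have "\<exists>xs\<in>set E6_minimal_coordinates. list_all2 (\<le>) xs [w 1, w 2, w 3, w 4, w 5, w 6]"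
    by (intro E6_minimal_coordinates_cover) auto
  then obtain xs where "xs \<in> set E6_minimal_coordinates" "list_all2 (\<le>) xs [w 1, w 2, w 3, w 4, w 5, w 6]"
    by blast
  moreover have "length xs = 6" using calculation(1) by (auto simp: E6_minimal_coordinates_def)
  ultimately have "weight_of_list xs \<le> w"
    by (subst w_eq) (simp add: weight_of_list_le_iff)
  then show "\<exists>s\<in>weight_of_list ` set E6_minimal_coordinates. s \<le> w"
    using \<open>xs \<in> set E6_minimal_coordinates\<close> by blast
next
  have antichain: "\<forall>xs\<in>set E6_minimal_coordinates. \<forall>ys\<in>set E6_minimal_coordinates.
      list_all2 (\<le>) xs ys \<longrightarrow> xs = ys"
    by (simp add: E6_minimal_coordinates_def)
  fix s s' assume "s \<in> weight_of_list ` set E6_minimal_coordinates"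
    "s' \<in> weight_of_list ` set E6_minimal_coordinates" and "s \<le> s'"
  moreover obtain xs ys where "xs \<in> set E6_minimal_coordinates" "ys \<in> set E6_minimal_coordinates"
    "s = weight_of_list xs" "s' = weight_of_list ys"
    using calculation(1,2) by blast
  moreover have "length xs = length ys"
    using calculation(4,5) by (auto simp: E6_minimal_coordinates_def)
  ultimately have "xs = ys"
    using antichain by (simp add: weight_of_list_le_iff)
  then show "s = s'" using \<open>s = weight_of_list xs\<close> \<open>s' = weight_of_list ys\<close> by simp
qed

lemma card_Psi_min_E6: "card (Psi_min E6) = 14"
proof -
  have "inj_on weight_of_list {xs. length xs = 6}"
    by (rule inj_onI) (simp add: weight_of_list_eq_iff)
  then have "inj_on weight_of_list (set E6_minimal_coordinates)"
    by (rule inj_on_subset) (auto simp: E6_minimal_coordinates_def)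
  then show ?thesis
    by (simp add: Psi_min_E6 card_image E6_minimal_coordinates_def)
qed

theorem lemma3p5:
  assumes "valid_type t"
  shows "(card (Psi_min t) = rank t \<longleftrightarrow>
            t = A 1 \<or> (\<exists>n. t = B n) \<or> (\<exists>n. t = C n) \<or> (\<exists>k. t = D (2 * k + 2))
            \<or> t = E7 \<or> t = E8 \<or> t = F4 \<or> t = G2)
       \<and> (t = E6 \<longrightarrow> card (Psi_min t) = 14)
       \<and> (\<forall>k. t = D (2 * k + 3) \<longrightarrow> card (Psi_min t) = rank t + 1)
       \<and> (\<forall>n. t = A n \<and> n \<ge> 2 \<longrightarrow> card (Psi_min t) \<ge> rank t + 1)"
proof (cases t)
  case (A n)
  with assms show ?thesis
    using card_Psi_min_A1 card_Psi_min_A_ge[of n] by (cases "n = 1") auto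
next
  case (B n)
  with assms show ?thesis using card_Psi_min_B[of n] by auto
next
  case (C n)
  with assms show ?thesis using card_Psi_min_C[of n] by auto
next
  case (D n)
  with assms have "4 \<le> n" by simp
  moreover have "even n \<longleftrightarrow> (\<exists>k. n = 2 * k + 2)" "odd n \<longleftrightarrow> (\<exists>k. n = 2 * k + 3)"
    using \<open>4 \<le> n\<close> by presburger+
  ultimately show ?thesis
    using D card_Psi_min_D[of n] by auto
qed (use card_Psi_min_E6 card_Psi_min_E7 card_Psi_min_E8 card_Psi_min_F4 card_Psi_min_G2 in simp_all)

end
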